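(* Let $M=\begin{pmatrix}\alpha&\beta\\ \beta&\gamma\end{pmatrix}\in\mathbb{Z}^{2\times2}$ be positive definite with $\det M$ a perfect square, and $Q(x)=x^TMx$. The following are equivalent: (1) $\alpha$ is a sum of two squares; (2) $Q(x)$ is a sum of two squares for all $x\in\mathbb{Z}^2$; (3) $Q(x)$ is a sum of two squares for some $x\in\mathbb{Z}^2\setminus\{0\}$. If these fail, then there is a prime $q\equiv3\pmod 4$ such that for every $x\in\mathbb{Z}^2\setminus\{0\}$ the exponent of $q$ in $Q(x)$ is odd. *)

theory Defs
  imports "HOL-Computational_Algebra.Computational_Algebra"
begin

definition sum_two_squares :: "int \<Rightarrow> bool" where
  "sum_two_squares n \<longleftrightarrow> (\<exists>a b :: int. n = a\<^sup>2 + b\<^sup>2)"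

definition qform :: "int \<Rightarrow> int \<Rightarrow> int \<Rightarrow> int \<Rightarrow> int \<Rightarrow> int" where
  "qform \<alpha> \<beta> \<gamma> x y = \<alpha> * x\<^sup>2 + 2 * \<beta> * x * y + \<gamma> * y\<^sup>2"

end

theory Submission
  imports Defs "HOL-Number_Theory.Number_Theory" "HOL-Library.Discrete_Functions"
begin

text \<open>
  Completing the square gives \<open>\<alpha> Q(x, y) = (\<alpha> x + \<beta> y)\<^sup>2 + (\<alpha>\<gamma> - \<beta>\<^sup>2) y\<^sup>2\<close>, which is a
  sum of two squares when \<open>\<alpha>\<gamma> - \<beta>\<^sup>2 = d\<^sup>2\<close>. By the two-squares theorem (a positive
  integer is a sum of two squares iff every prime \<open>q \<equiv> 3 (mod 4)\<close> divides it to an even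
  power), the \<open>q\<close>-adic valuations of \<open>\<alpha>\<close> and of \<open>Q(x, y)\<close>, \<open>(x, y) \<noteq> 0\<close>, therefore have
  the same parity for every such \<open>q\<close>; all three claims follow. The two-squares theorem
  itself rests on Euler's criterion for \<open>-1\<close> and on Thue's lemma.
\<close>

lemma sum_two_squares_mult:
  "sum_two_squares a \<Longrightarrow> sum_two_squares b \<Longrightarrow> sum_two_squares (a * b)"
  unfolding sum_two_squares_def
proof (elim exE)
  fix x y u v assume "a = x\<^sup>2 + y\<^sup>2" "b = u\<^sup>2 + v\<^sup>2"
  then have "a * b = (x * u - y * v)\<^sup>2 + (x * v + y * u)\<^sup>2"
    by (simp add: power2_eq_square algebra_simps)
  then show "\<exists>c d. a * b = c\<^sup>2 + d\<^sup>2" by blast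
qed

lemma sum_two_squares_power2 [simp]: "sum_two_squares (x\<^sup>2)"
  unfolding sum_two_squares_def by (rule exI[of _ x], rule exI[of _ 0]) simp

lemma sum_two_squares_0 [simp]: "sum_two_squares 0"
  and sum_two_squares_1 [simp]: "sum_two_squares 1"
  using sum_two_squares_power2[of 0] sum_two_squares_power2[of 1] by simp_all

lemma sum_two_squares_power: "sum_two_squares a \<Longrightarrow> sum_two_squares (a ^ n)"
  by (induction n) (auto intro: sum_two_squares_mult)

lemma sum_two_squares_prod:
  "(\<And>x. x \<in> A \<Longrightarrow> sum_two_squares (f x)) \<Longrightarrow> sum_two_squares (prod f A)"
  by (induction A rule: infinite_finite_induct) (auto intro: sum_two_squares_mult)

lemma Legendre_minus_one:
  fixes p :: int
  assumes "prime p" "p > 2"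
  shows "Legendre (-1) p = (-1) ^ nat ((p - 1) div 2)"
proof -
  have p: "p = int (nat p)" "prime (nat p)" "2 < nat p" using assms by auto
  have "nat p - 1 = nat (p - 1)" by simp
  then have "(nat p - 1) div 2 = nat ((p - 1) div 2)" by (simp add: nat_div_distrib)
  then have cong: "[Legendre (-1) p = (-1) ^ nat ((p - 1) div 2)] (mod p)"
    using euler_criterion[OF p(2,3), of "-1"] p(1) by metis
  have not_cong: "\<not> [1 = -1] (mod p)"
  proof
    assume "[1 = -1] (mod p)"
    then have "p dvd 2" by (simp add: cong_iff_dvd_diff)
    with assms(2) show False by (auto dest: zdvd_imp_le)
  qed
  have "\<not> [-1 = 0] (mod p)"
    using assms(2) by (auto simp: cong_0_iff dest: zdvd_imp_le)
  then have "Legendre (-1) p = 1 \<or> Legendre (-1) p = -1" by (simp add: Legendre_def)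
  moreover have "(-1::int) ^ nat ((p - 1) div 2) = 1 \<or> (-1::int) ^ nat ((p - 1) div 2) = -1"
    by (simp add: minus_one_power_iff)
  ultimately show ?thesis using cong not_cong cong_sym by fastforce
qed

lemma QuadRes_minus_one_iff:
  fixes p :: int
  assumes "prime p" "p > 2"
  shows "QuadRes p (-1) \<longleftrightarrow> p mod 4 = 1"
proof -
  have "\<not> [-1 = 0] (mod p)"
    using assms(2) by (auto simp: cong_0_iff dest: zdvd_imp_le)
  then have "QuadRes p (-1) \<longleftrightarrow> Legendre (-1) p = 1" by (simp add: Legendre_def)
  also have "\<dots> \<longleftrightarrow> even (nat ((p - 1) div 2))"
    by (simp add: Legendre_minus_one[OF assms] minus_one_power_iff)
  also have "\<dots> \<longleftrightarrow> p mod 4 = 1"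
    using prime_odd_int[OF assms] assms(2) by (auto simp: even_nat_iff elim!: oddE) presburger+
  finally show ?thesis .
qed

lemma Thue_lemma:
  fixes p x :: int
  assumes "p > 0"
  shows "\<exists>u v. (u, v) \<noteq> (0, 0) \<and> u\<^sup>2 \<le> p \<and> v\<^sup>2 \<le> p \<and> p dvd u - x * v"
proof -
  define k where "k = int (floor_sqrt (nat p))"
  have "int ((floor_sqrt (nat p))\<^sup>2) \<le> int (nat p)"
    by (subst of_nat_le_iff) (rule floor_sqrt_power2_le)
  then have "k\<^sup>2 \<le> p" using assms by (simp add: k_def)
  have "int (nat p) < int ((Suc (floor_sqrt (nat p)))\<^sup>2)"
    by (subst of_nat_less_iff) (rule Suc_floor_sqrt_power2_gt)
  then have "p < (k + 1)\<^sup>2" using assms by (simp add: k_def add.commute)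
  have "k \<ge> 0" by (simp add: k_def)
  define S where "S = {0..k} \<times> {0..k}"
  define f where "f = (\<lambda>(i, j). (i - x * j) mod p)"
  \<comment> \<open>Pigeonhole: \<open>(k + 1)\<^sup>2 > p\<close> pairs, but only \<open>p\<close> residues.\<close>
  have "\<not> inj_on f S"
  proof
    assume "inj_on f S"
    moreover have "f ` S \<subseteq> {0..<p}" unfolding f_def using assms by auto
    ultimately have "card S \<le> card {0..<p}" by (metis card_inj_on_le finite_atLeastLessThan_int)
    moreover have "nat p < card S" unfolding S_def using \<open>p < (k + 1)\<^sup>2\<close> \<open>k \<ge> 0\<close>
      by (simp add: card_cartesian_product power2_eq_square flip: nat_mult_distrib)
    ultimately show False by simp
  qed
  then obtain i j i' j' where ij: "(i, j) \<in> S" "(i', j') \<in> S" "(i, j) \<noteq> (i', j')"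
      "f (i, j) = f (i', j')"
    unfolding inj_on_def by auto
  show ?thesis
  proof (intro exI conjI)
    show "(i - i', j - j') \<noteq> (0, 0)" using ij(3) by simp
    show "(i - i')\<^sup>2 \<le> p" "(j - j')\<^sup>2 \<le> p"
      using ij(1,2) unfolding S_def
      by (auto intro!: order_trans[OF _ \<open>k\<^sup>2 \<le> p\<close>] simp: abs_le_square_iff[symmetric])
    have "p dvd (i - x * j) - (i' - x * j')"
      using ij(4) unfolding f_def by (simp add: mod_eq_dvd_iff)
    then show "p dvd (i - i') - x * (j - j')" by (simp add: algebra_simps)
  qed
qed

lemma prime_sum_two_squares_if_QuadRes:
  fixes p :: int
  assumes "prime p" "QuadRes p (-1)"
  shows "sum_two_squares p"
proof -
  obtain x where "[x\<^sup>2 = -1] (mod p)" using assms(2) by (auto simp: QuadRes_def)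
  then have x: "p dvd x\<^sup>2 + 1" by (simp add: cong_iff_dvd_diff)
  have "p > 0" using assms(1) prime_gt_0_int by blast
  then obtain u v where uv: "(u, v) \<noteq> (0, 0)" "u\<^sup>2 \<le> p" "v\<^sup>2 \<le> p" "p dvd u - x * v"
    using Thue_lemma by blast
  have "u\<^sup>2 + v\<^sup>2 = (u - x * v) * (u + x * v) + v\<^sup>2 * (x\<^sup>2 + 1)"
    by (simp add: power2_eq_square algebra_simps)
  then have "p dvd u\<^sup>2 + v\<^sup>2" using uv(4) x by (metis dvd_add dvd_mult dvd_mult2)
  then obtain m where m: "u\<^sup>2 + v\<^sup>2 = p * m" by (elim dvdE)
  \<comment> \<open>A prime is not a square, so both bounds are strict and \<open>0 < m < 2\<close>.\<close>
  have "u\<^sup>2 \<noteq> p" "v\<^sup>2 \<noteq> p" using assms(1) prime_power_iff[of _ 2] by auto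
  then have "p * m < p * 2" using m uv(2,3) by linarith
  moreover have "p * m > p * 0" using m uv(1) by (simp add: sum_power2_gt_zero_iff flip: m)
  ultimately have "m = 1" using \<open>p > 0\<close> by (simp only: mult_less_cancel_left_pos)
  then show ?thesis using m unfolding sum_two_squares_def by auto
qed

lemma QuadRes_minus_one_if_mod_4_neq_3:
  fixes p :: int
  assumes "prime p" "p mod 4 \<noteq> 3"
  shows "QuadRes p (-1)"
proof (cases "p = 2")
  case True
  have "[(1::int)\<^sup>2 = -1] (mod 2)" by (simp add: cong_iff_dvd_diff)
  then show ?thesis using True unfolding QuadRes_def by blast
next
  case False
  then have "p > 2" using prime_ge_2_int[OF assms(1)] by simp
  moreover have "p mod 4 = 1"
    using prime_odd_int[OF assms(1) \<open>p > 2\<close>] assms(2) by presburger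
  ultimately show ?thesis using QuadRes_minus_one_iff assms(1) by blast
qed

lemma prime_mod_4_eq_3_dvd_sum_squares:
  fixes q a b :: int
  assumes "prime q" "q mod 4 = 3" "q dvd a\<^sup>2 + b\<^sup>2"
  shows "q dvd a"
proof (rule ccontr)
  assume "\<not> q dvd a"
  then have "coprime a q" using prime_imp_coprime[OF assms(1)] coprime_commute by blast
  then obtain c where c: "[a * c = 1] (mod q)" using cong_solve_coprime_int by blast
  \<comment> \<open>Dividing by \<open>a\<close> turns \<open>a\<^sup>2 + b\<^sup>2 \<equiv> 0\<close> into \<open>(b c)\<^sup>2 \<equiv> -1\<close>.\<close>
  have "(b * c)\<^sup>2 + 1 = (a\<^sup>2 + b\<^sup>2) * c\<^sup>2 - (a * c - 1) * (a * c + 1)"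
    by (simp add: power2_eq_square algebra_simps)
  moreover have "q dvd (a * c - 1) * (a * c + 1)" using c by (simp add: cong_iff_dvd_diff)
  ultimately have "q dvd (b * c)\<^sup>2 + 1" using assms(3) by (metis dvd_diff dvd_mult2)
  then have "QuadRes q (-1)" unfolding QuadRes_def by (auto simp: cong_iff_dvd_diff)
  moreover have "q > 2" using assms(2) prime_ge_2_int[OF assms(1)] by (cases "q = 2") auto
  ultimately show False using QuadRes_minus_one_iff[OF assms(1)] assms(2) by simp
qed

lemma even_multiplicity_sum_two_squares:
  fixes q n :: int
  assumes q: "prime q" "q mod 4 = 3" and "sum_two_squares n" "n \<noteq> 0"
  shows "even (multiplicity q n)"
  using assms(3,4)
proof (induction "nat n" arbitrary: n rule: less_induct)
  case less
  obtain a b where n: "n = a\<^sup>2 + b\<^sup>2" using less.prems(1) unfolding sum_two_squares_def by blast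
  show ?case
  proof (cases "q dvd n")
    case False
    then show ?thesis by (simp add: not_dvd_imp_multiplicity_0)
  next
    case True
    then have "q dvd a" "q dvd b"
      using prime_mod_4_eq_3_dvd_sum_squares[OF q] n by (metis add.commute)+
    then obtain a' b' where "a = q * a'" "b = q * b'" by (elim dvdE)
    define n' where "n' = a'\<^sup>2 + b'\<^sup>2"
    have nn': "n = q\<^sup>2 * n'" using n \<open>a = q * a'\<close> \<open>b = q * b'\<close> unfolding n'_def
      by (simp add: power2_eq_square algebra_simps)
    have "n' \<noteq> 0" using nn' less.prems(2) by auto
    have "q > 1" using q(1) prime_gt_1_int by blast
    have "n' > 0" using \<open>n' \<noteq> 0\<close> unfolding n'_def by (simp add: sum_power2_gt_zero_iff)
    then have "nat n' < nat n" using \<open>q > 1\<close> nn' by (simp add: one_less_power)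
    moreover have "sum_two_squares n'" unfolding n'_def sum_two_squares_def by blast
    ultimately have "even (multiplicity q n')" using less.hyps \<open>n' \<noteq> 0\<close> by blast
    moreover have "multiplicity q n = 2 + multiplicity q n'"
      using nn' \<open>n' \<noteq> 0\<close> \<open>q > 1\<close> q(1)
      by (simp add: prime_elem_multiplicity_mult_distrib prime_imp_prime_elem)
    ultimately show ?thesis by simp
  qed
qed

lemma sum_two_squares_if_even_multiplicity:
  fixes n :: int
  assumes "n > 0" "\<And>q. prime q \<Longrightarrow> q mod 4 = 3 \<Longrightarrow> even (multiplicity q n)"
  shows "sum_two_squares n"
proof -
  have "sum_two_squares (p ^ multiplicity p n)" if p: "p \<in> prime_factors n" for p
  proof (cases "p mod 4 = 3")
    case True
    then obtain k where "multiplicity p n = 2 * k"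
      using assms(2) in_prime_factors_imp_prime[OF p] by (auto elim!: evenE)
    then show ?thesis by (simp add: power_mult power2_eq_square[symmetric] mult.commute)
  next
    case False
    then show ?thesis using p
      by (auto intro: sum_two_squares_power prime_sum_two_squares_if_QuadRes
          QuadRes_minus_one_if_mod_4_neq_3)
  qed
  then have "sum_two_squares (\<Prod>p \<in> prime_factors n. p ^ multiplicity p n)"
    by (rule sum_two_squares_prod)
  then show ?thesis using prime_factorization_int[OF assms(1)] by simp
qed

theorem sum_two_squares_iff_even_multiplicity:
  fixes n :: int
  assumes "n > 0"
  shows "sum_two_squares n \<longleftrightarrow> (\<forall>q. prime q \<and> q mod 4 = 3 \<longrightarrow> even (multiplicity q n))"
  using assms sum_two_squares_if_even_multiplicity even_multiplicity_sum_two_squares by auto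

lemma qform_times_first_coeff:
  "\<alpha> * qform \<alpha> \<beta> \<gamma> x y = (\<alpha> * x + \<beta> * y)\<^sup>2 + (\<alpha> * \<gamma> - \<beta>\<^sup>2) * y\<^sup>2"
  unfolding qform_def by (simp add: power2_eq_square algebra_simps)

lemma qform_pos:
  assumes "\<alpha> > 0" "\<alpha> * \<gamma> - \<beta>\<^sup>2 > 0" "(x, y) \<noteq> (0, 0)"
  shows "qform \<alpha> \<beta> \<gamma> x y > 0"
proof -
  have "(\<alpha> * x + \<beta> * y)\<^sup>2 + (\<alpha> * \<gamma> - \<beta>\<^sup>2) * y\<^sup>2 > 0"
  proof (cases "y = 0")
    case True
    then show ?thesis using assms by simp
  next
    case False
    then show ?thesis using assms(2) by (simp add: add_nonneg_pos)
  qed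
  then have "\<alpha> * qform \<alpha> \<beta> \<gamma> x y > 0" by (simp only: qform_times_first_coeff)
  then show ?thesis using assms(1) by (simp add: zero_less_mult_iff)
qed

lemma even_multiplicity_first_coeff_plus_qform:
  fixes \<alpha> \<beta> \<gamma> q :: int
  assumes "\<alpha> > 0" "\<alpha> * \<gamma> - \<beta>\<^sup>2 = d\<^sup>2" "d \<noteq> 0" "(x, y) \<noteq> (0, 0)"
    and "prime q" "q mod 4 = 3"
  shows "even (multiplicity q \<alpha> + multiplicity q (qform \<alpha> \<beta> \<gamma> x y))"
proof -
  have "\<alpha> * \<gamma> - \<beta>\<^sup>2 > 0" using assms(2,3) by simp
  then have "qform \<alpha> \<beta> \<gamma> x y > 0" using qform_pos assms(1,4) by blast
  then have Q: "qform \<alpha> \<beta> \<gamma> x y \<noteq> 0" by simp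
  have "\<alpha> * qform \<alpha> \<beta> \<gamma> x y = (\<alpha> * x + \<beta> * y)\<^sup>2 + (d * y)\<^sup>2"
    unfolding qform_times_first_coeff assms(2) by (simp add: power_mult_distrib)
  then have "sum_two_squares (\<alpha> * qform \<alpha> \<beta> \<gamma> x y)"
    unfolding sum_two_squares_def by blast
  then have "even (multiplicity q (\<alpha> * qform \<alpha> \<beta> \<gamma> x y))"
    using even_multiplicity_sum_two_squares assms(1,5,6) Q by simp
  moreover have "multiplicity q (\<alpha> * qform \<alpha> \<beta> \<gamma> x y)
      = multiplicity q \<alpha> + multiplicity q (qform \<alpha> \<beta> \<gamma> x y)"
    using prime_elem_multiplicity_mult_distrib[OF prime_imp_prime_elem[OF assms(5)]] assms(1) Q
    by simp
  ultimately show ?thesis by simp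
qed

lemma sum_two_squares_qform_iff:
  fixes \<alpha> \<beta> \<gamma> :: int
  assumes "\<alpha> > 0" "\<alpha> * \<gamma> - \<beta>\<^sup>2 = d\<^sup>2" "d \<noteq> 0" "(x, y) \<noteq> (0, 0)"
  shows "sum_two_squares (qform \<alpha> \<beta> \<gamma> x y) \<longleftrightarrow> sum_two_squares \<alpha>"
proof -
  have "\<alpha> * \<gamma> - \<beta>\<^sup>2 > 0" using assms(2,3) by simp
  then have "qform \<alpha> \<beta> \<gamma> x y > 0" using qform_pos assms(1,4) by blast
  then show ?thesis
    using sum_two_squares_iff_even_multiplicity assms(1)
      even_multiplicity_first_coeff_plus_qform[OF assms] by auto
qed

theorem mainTheorem14:
  fixes \<alpha> \<beta> \<gamma> :: int
  assumes posdef: "\<alpha> > 0" "\<alpha> * \<gamma> - \<beta>\<^sup>2 > 0"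
    and detsq: "\<exists>d::int. \<alpha> * \<gamma> - \<beta>\<^sup>2 = d\<^sup>2"
  shows "(sum_two_squares \<alpha> \<longleftrightarrow> (\<forall>x y. sum_two_squares (qform \<alpha> \<beta> \<gamma> x y)))
       \<and> (sum_two_squares \<alpha> \<longleftrightarrow>
            (\<exists>x y. (x, y) \<noteq> (0, 0) \<and> sum_two_squares (qform \<alpha> \<beta> \<gamma> x y)))
       \<and> (\<not> sum_two_squares \<alpha> \<longrightarrow>
            (\<exists>q::int. prime q \<and> q mod 4 = 3 \<and>
               (\<forall>x y. (x, y) \<noteq> (0, 0) \<longrightarrow> odd (multiplicity q (qform \<alpha> \<beta> \<gamma> x y)))))"
proof -
  obtain d where d: "\<alpha> * \<gamma> - \<beta>\<^sup>2 = d\<^sup>2" "d \<noteq> 0" using detsq posdef(2) by force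
  note iff = sum_two_squares_qform_iff[OF posdef(1) d]
  have Q00: "qform \<alpha> \<beta> \<gamma> 0 0 = 0" and Q10: "qform \<alpha> \<beta> \<gamma> 1 0 = \<alpha>"
    by (simp_all add: qform_def)
  have "sum_two_squares \<alpha> \<longleftrightarrow> (\<forall>x y. sum_two_squares (qform \<alpha> \<beta> \<gamma> x y))"
  proof (intro iffI allI)
    show "sum_two_squares (qform \<alpha> \<beta> \<gamma> x y)" if "sum_two_squares \<alpha>" for x y
      using that iff Q00 by (cases "(x, y) = (0, 0)") auto
  qed (use Q10 in metis)
  moreover have "sum_two_squares \<alpha> \<longleftrightarrow>
      (\<exists>x y. (x, y) \<noteq> (0, 0) \<and> sum_two_squares (qform \<alpha> \<beta> \<gamma> x y))"
  proof
    show "\<exists>x y. (x, y) \<noteq> (0, 0) \<and> sum_two_squares (qform \<alpha> \<beta> \<gamma> x y)"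
      if "sum_two_squares \<alpha>" using that Q10 by (intro exI[of _ 1] exI[of _ 0]) simp
  qed (use iff in blast)
  moreover have "\<exists>q::int. prime q \<and> q mod 4 = 3 \<and>
      (\<forall>x y. (x, y) \<noteq> (0, 0) \<longrightarrow> odd (multiplicity q (qform \<alpha> \<beta> \<gamma> x y)))"
    if not_sum: "\<not> sum_two_squares \<alpha>"
  proof -
    obtain q :: int where q: "prime q" "q mod 4 = 3" "odd (multiplicity q \<alpha>)"
      using not_sum sum_two_squares_iff_even_multiplicity posdef(1) by blast
    then show ?thesis
      using even_multiplicity_first_coeff_plus_qform[OF posdef(1) d] by auto
  qed
  ultimately show ?thesis by blast
qed

end
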